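(* Let $X$ be a linearly ordered set. A linear basis of the free $\mathrm{BiCom}$-algebra $\mathrm{BiCom}\langle X\rangle$ consists of the words $x_1*\dots*x_t*(y_1\odot\dots\odot y_k)$, with $t\ge 0$, $k\ge 1$, $x_i,y_j\in X$, and $x_1\le\dots\le x_t\le y_1\le\dots\le y_k$ (for $t=0$ the word is $y_1\odot\dots\odot y_k$; bracketings inside $*$-products and $\odot$-products are irrelevant by associativity).
   Context: A $\mathrm{BiCom}$-algebra is a vector space with two bilinear operations $*$ and $\odot$, each associative and commutative, satisfying $(x\odot y)*z=x\odot(y*z)$. *)

theory Defs
  imports Main
begin

text \<open>Free magma on X with two binary operations (star and odot): these are the
  nonassociative, noncommutative words; their finitely supported 'k-linear
  combinations form the free (absolutely free) algebra with two bilinear operations.\<close>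
datatype 'x bterm = V 'x | St "'x bterm" "'x bterm" | Od "'x bterm" "'x bterm"

type_synonym ('x, 'k) vec = "'x bterm \<Rightarrow> 'k"

definition fin_supp :: "('x, 'k::zero) vec \<Rightarrow> bool" where
  "fin_supp f \<longleftrightarrow> finite {t. f t \<noteq> 0}"

definition mon :: "'x bterm \<Rightarrow> ('x, 'k::zero_neq_one) vec" where
  "mon t = (\<lambda>s. if s = t then 1 else 0)"

definition lincomb :: "('x bterm \<Rightarrow> 'k::field) \<Rightarrow> 'x bterm set \<Rightarrow> ('x, 'k) vec" where
  "lincomb c S = (\<lambda>s. \<Sum>w\<in>S. c w * mon w s)"

text \<open>Bilinear extension of the operations, multiplying a vector by a monomial
  on the right (f * u) or on the left (u * f).\<close>
definition st_r :: "('x, 'k::zero) vec \<Rightarrow> 'x bterm \<Rightarrow> ('x, 'k) vec" where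
  "st_r f u = (\<lambda>s. case s of St a b \<Rightarrow> if b = u then f a else 0 | _ \<Rightarrow> 0)"
definition st_l :: "'x bterm \<Rightarrow> ('x, 'k::zero) vec \<Rightarrow> ('x, 'k) vec" where
  "st_l u f = (\<lambda>s. case s of St a b \<Rightarrow> if a = u then f b else 0 | _ \<Rightarrow> 0)"
definition od_r :: "('x, 'k::zero) vec \<Rightarrow> 'x bterm \<Rightarrow> ('x, 'k) vec" where
  "od_r f u = (\<lambda>s. case s of Od a b \<Rightarrow> if b = u then f a else 0 | _ \<Rightarrow> 0)"
definition od_l :: "'x bterm \<Rightarrow> ('x, 'k::zero) vec \<Rightarrow> ('x, 'k) vec" where
  "od_l u f = (\<lambda>s. case s of Od a b \<Rightarrow> if a = u then f b else 0 | _ \<Rightarrow> 0)"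

definition diff_mon :: "'x bterm \<Rightarrow> 'x bterm \<Rightarrow> ('x, 'k::field) vec" where
  "diff_mon p q = (\<lambda>s. mon p s - mon q s)"

text \<open>Defining identities of BiCom-algebras (multilinear, so instances on words suffice).\<close>
definition bicom_rels :: "('x, 'k::field) vec set" where
  "bicom_rels = (\<Union>a b c.
     { diff_mon (St (St a b) c) (St a (St b c)),
       diff_mon (St a b) (St b a),
       diff_mon (Od (Od a b) c) (Od a (Od b c)),
       diff_mon (Od a b) (Od b a),
       diff_mon (St (Od a b) c) (Od a (St b c)) })"

inductive_set bicom_ideal :: "('x, 'k::field) vec set" where
  rel: "r \<in> bicom_rels \<Longrightarrow> r \<in> bicom_ideal"
| zero: "(\<lambda>_. 0) \<in> bicom_ideal"
| add: "f \<in> bicom_ideal \<Longrightarrow> g \<in> bicom_ideal \<Longrightarrow> (\<lambda>s. f s + g s) \<in> bicom_ideal"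
| smult: "f \<in> bicom_ideal \<Longrightarrow> (\<lambda>s. a * f s) \<in> bicom_ideal"
| str: "f \<in> bicom_ideal \<Longrightarrow> st_r f u \<in> bicom_ideal"
| stl: "f \<in> bicom_ideal \<Longrightarrow> st_l u f \<in> bicom_ideal"
| odr: "f \<in> bicom_ideal \<Longrightarrow> od_r f u \<in> bicom_ideal"
| odl: "f \<in> bicom_ideal \<Longrightarrow> od_l u f \<in> bicom_ideal"

fun od_word :: "'x list \<Rightarrow> 'x bterm" where
  "od_word [] = undefined"
| "od_word [y] = V y"
| "od_word (y # ys) = Od (V y) (od_word ys)"

fun nf_word :: "'x list \<Rightarrow> 'x list \<Rightarrow> 'x bterm" where
  "nf_word [] ys = od_word ys"
| "nf_word (x # xs) ys = St (V x) (nf_word xs ys)"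

definition basis_words :: "'x::linorder bterm set" where
  "basis_words = {nf_word xs ys | xs ys. ys \<noteq> [] \<and> sorted (xs @ ys)}"

end

theory Submission imports Defs "HOL-Library.Multiset" begin

text \<open>Spanning: using the identities, every word can be brought to a right-bracketed word
  \<open>x\<^sub>1 * \<dots> * x\<^sub>t * (y\<^sub>1 \<odot> \<dots> \<odot> y\<^sub>k)\<close>, and within such words any two letters may be exchanged,
  even across the two blocks (\<open>a * (b \<odot> Z) = b * (a \<odot> Z)\<close>), so the letters can be sorted.
  Independence: each defining identity relates two words with the same multiset of letters
  and the same number of \<open>*\<close>'s. Hence the linear functional summing the coefficients over
  one such degree class vanishes on the ideal, and distinct basis words have distinct degrees.\<close>

section \<open>The degree of a word\<close>

fun letters :: "'x bterm \<Rightarrow> 'x multiset" where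
  "letters (V x) = {#x#}"
| "letters (St a b) = letters a + letters b"
| "letters (Od a b) = letters a + letters b"

fun star_count :: "'x bterm \<Rightarrow> nat" where
  "star_count (V x) = 0"
| "star_count (St a b) = star_count a + star_count b + 1"
| "star_count (Od a b) = star_count a + star_count b"

definition degree :: "'x bterm \<Rightarrow> 'x multiset \<times> nat" where
  "degree s = (letters s, star_count s)"

lemma letters_nonempty: "letters s \<noteq> {#}"
  by (induction s) auto

lemma finite_bterms_bounded:
  assumes "finite X"
  shows "finite {s. set_mset (letters s) \<subseteq> X \<and> size (letters s) \<le> n}"
proof (induction n)
  case 0
  then show ?case by (simp add: letters_nonempty)
next
  case (Suc n)
  let ?T = "{s. set_mset (letters s) \<subseteq> X \<and> size (letters s) \<le> n}"
  have "{s. set_mset (letters s) \<subseteq> X \<and> size (letters s) \<le> Suc n}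
     \<subseteq> V ` X \<union> case_prod St ` (?T \<times> ?T) \<union> case_prod Od ` (?T \<times> ?T)"
  proof
    fix s assume s: "s \<in> {s. set_mset (letters s) \<subseteq> X \<and> size (letters s) \<le> Suc n}"
    have pos: "size (letters t) \<ge> 1" for t :: "'a bterm"
      using letters_nonempty[of t] by (simp add: Suc_le_eq nonempty_has_size)
    show "s \<in> V ` X \<union> case_prod St ` (?T \<times> ?T) \<union> case_prod Od ` (?T \<times> ?T)"
    proof (cases s)
      case (St a b)
      then have "(a, b) \<in> ?T \<times> ?T" using s pos[of a] pos[of b] by auto
      then show ?thesis using St by blast
    next
      case (Od a b)
      then have "(a, b) \<in> ?T \<times> ?T" using s pos[of a] pos[of b] by auto
      then show ?thesis using Od by blast
    qed (use s in auto)
  qed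
  then show ?case using Suc assms by (auto intro: finite_subset)
qed

lemma finite_degree_class: "finite {s. degree s = p}"
  by (rule finite_subset[OF _ finite_bterms_bounded[of "set_mset (fst p)" "size (fst p)"]])
     (auto simp: degree_def)

lemma letters_od_word: "ys \<noteq> [] \<Longrightarrow> letters (od_word ys) = mset ys"
  and star_count_od_word: "ys \<noteq> [] \<Longrightarrow> star_count (od_word ys) = 0"
  by (induction ys rule: od_word.induct) auto

lemma degree_nf_word: "ys \<noteq> [] \<Longrightarrow> degree (nf_word xs ys) = (mset (xs @ ys), length xs)"
  by (induction xs) (auto simp: degree_def letters_od_word star_count_od_word)

lemma inj_on_degree_basis_words: "inj_on degree (basis_words :: 'x::linorder bterm set)"
proof
  fix v w :: "'x bterm"
  assume "v \<in> basis_words" "w \<in> basis_words" and deg: "degree v = degree w"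
  then obtain xs ys xs' ys' where
    v: "v = nf_word xs ys" "ys \<noteq> []" "sorted (xs @ ys)" and
    w: "w = nf_word xs' ys'" "ys' \<noteq> []" "sorted (xs' @ ys')"
    unfolding basis_words_def by blast
  have perm: "mset (xs @ ys) = mset (xs' @ ys')" and len: "length xs = length xs'"
    using deg v w by (auto simp: degree_nf_word)
  have "xs @ ys = xs' @ ys'"
    using properties_for_sort[OF perm v(3)] properties_for_sort[OF refl w(3)] by simp
  then show "v = w" using v w len by simp
qed

section \<open>Degree sums vanish on the ideal\<close>

definition degree_sum :: "('x, 'k::field) vec \<Rightarrow> 'x multiset \<times> nat \<Rightarrow> 'k" where
  "degree_sum f p = sum f {s. degree s = p}"

lemma degree_sum_mon: "degree_sum (mon a) p = (if degree a = p then 1 else 0)"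
  unfolding degree_sum_def mon_def using finite_degree_class[of p] by simp

lemma degree_sum_lincomb:
  "degree_sum (lincomb c S) p = (\<Sum>v\<in>S. c v * degree_sum (mon v) p)"
  unfolding degree_sum_def lincomb_def by (subst sum.swap) (simp add: sum_distrib_left)

text \<open>Multiplying by a fixed word is injective on words and shifts degrees uniformly, so it
  maps each degree class into a single one.\<close>
lemma degree_sum_transport:
  assumes "inj C"
    and "\<And>a b. degree (C a) = degree (C b) \<longleftrightarrow> degree a = degree b"
    and "\<And>s. s \<notin> range C \<Longrightarrow> h s = 0"
    and "\<And>a. h (C a) = f a"
    and "\<And>q. degree_sum f q = 0"
  shows "degree_sum h p = 0"
proof -
  let ?G = "{a. degree (C a) = p}"
  have "degree_sum h p = sum h (C ` ?G)"
    unfolding degree_sum_def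
    by (rule sum.mono_neutral_right[OF finite_degree_class]) (use assms(3) in force)+
  also have "\<dots> = sum f ?G"
    using assms(1,4) by (simp add: sum.reindex inj_on_def inj_def)
  also have "\<dots> = 0"
  proof (cases "?G = {}")
    case False
    then obtain a0 where "degree (C a0) = p" by auto
    then have "?G = {a. degree a = degree a0}" using assms(2) by auto
    then show ?thesis using assms(5)[of "degree a0"] by (simp add: degree_sum_def)
  qed simp
  finally show ?thesis .
qed

lemma degree_sum_bicom_ideal: "g \<in> bicom_ideal \<Longrightarrow> degree_sum g p = 0"
proof (induction g arbitrary: p rule: bicom_ideal.induct)
  case (rel r)
  then obtain a b where "r = diff_mon a b" "degree a = degree b"
    unfolding bicom_rels_def by (auto simp: degree_def add_ac)
  moreover have "degree_sum (diff_mon a b) p = degree_sum (mon a) p - degree_sum (mon b) p"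
    unfolding degree_sum_def diff_mon_def by (simp add: sum_subtractf)
  ultimately show ?case by (simp add: degree_sum_mon)
next
  case zero
  then show ?case by (simp add: degree_sum_def)
next
  case (add f g)
  then show ?case by (simp add: degree_sum_def sum.distrib)
next
  case (smult f a)
  then show ?case by (simp add: degree_sum_def sum_distrib_left[symmetric])
next
  case (str f u)
  show ?case
    by (rule degree_sum_transport[where C = "\<lambda>a. St a u" and f = f])
       (auto simp: inj_def degree_def st_r_def str split: bterm.splits)
next
  case (stl f u)
  show ?case
    by (rule degree_sum_transport[where C = "\<lambda>a. St u a" and f = f])
       (auto simp: inj_def degree_def st_l_def stl split: bterm.splits)
next
  case (odr f u)
  show ?case
    by (rule degree_sum_transport[where C = "\<lambda>a. Od a u" and f = f])
       (auto simp: inj_def degree_def od_r_def odr split: bterm.splits)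
next
  case (odl f u)
  show ?case
    by (rule degree_sum_transport[where C = "\<lambda>a. Od u a" and f = f])
       (auto simp: inj_def degree_def od_l_def odl split: bterm.splits)
qed

lemma basis_words_independent:
  fixes c :: "'x::linorder bterm \<Rightarrow> 'k::field"
  assumes "finite S" "S \<subseteq> basis_words" "lincomb c S \<in> bicom_ideal" "w \<in> S"
  shows "c w = 0"
proof -
  have "0 = degree_sum (lincomb c S) (degree w)"
    using assms(3) degree_sum_bicom_ideal by metis
  also have "\<dots> = (\<Sum>v\<in>S. if v = w then c v else 0)"
    unfolding degree_sum_lincomb
    using assms(2,4) inj_on_degree_basis_words
    by (intro sum.cong) (auto simp: degree_sum_mon inj_on_def subsetD)
  also have "\<dots> = c w" using assms(1,4) by simp
  finally show ?thesis by simp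
qed

definition bicom_eqv :: "'k::field itself \<Rightarrow> 'x bterm \<Rightarrow> 'x bterm \<Rightarrow> bool" where
  "bicom_eqv K p q \<longleftrightarrow> (diff_mon p q :: ('x, 'k) vec) \<in> bicom_ideal"

lemma bicom_eqv_refl: "bicom_eqv K p p"
  unfolding bicom_eqv_def diff_mon_def using bicom_ideal.zero by simp

lemma bicom_eqv_sym:
  fixes K :: "'k::field itself" and p q :: "'x bterm"
  assumes "bicom_eqv K p q"
  shows "bicom_eqv K q p"
proof -
  have "(\<lambda>s. (-1) * (diff_mon p q :: ('x, 'k) vec) s) \<in> bicom_ideal"
    using assms unfolding bicom_eqv_def by (rule bicom_ideal.smult)
  then show ?thesis by (simp add: bicom_eqv_def diff_mon_def)
qed

lemma bicom_eqv_trans [trans]: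
  fixes K :: "'k::field itself" and p q r :: "'x bterm"
  assumes "bicom_eqv K p q" "bicom_eqv K q r"
  shows "bicom_eqv K p r"
proof -
  have "(\<lambda>s. (diff_mon p q :: ('x, 'k) vec) s + diff_mon q r s) \<in> bicom_ideal"
    using assms unfolding bicom_eqv_def by (rule bicom_ideal.add)
  then show ?thesis by (simp add: bicom_eqv_def diff_mon_def)
qed

lemma bicom_eqv_rel: "(diff_mon p q :: ('x, 'k::field) vec) \<in> bicom_rels \<Longrightarrow> bicom_eqv (K :: 'k itself) p q"
  unfolding bicom_eqv_def by (rule bicom_ideal.rel)

lemma St_assoc: "bicom_eqv K (St (St a b) c) (St a (St b c))"
  and St_commute: "bicom_eqv K (St a b) (St b a)"
  and Od_assoc: "bicom_eqv K (Od (Od a b) c) (Od a (Od b c))"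
  and Od_commute: "bicom_eqv K (Od a b) (Od b a)"
  and St_Od_assoc: "bicom_eqv K (St (Od a b) c) (Od a (St b c))"
  by (rule bicom_eqv_rel, auto simp: bicom_rels_def)+

lemma st_r_diff_mon: "st_r (diff_mon a a') b = diff_mon (St a b) (St a' b)"
  and st_l_diff_mon: "st_l a (diff_mon b b') = diff_mon (St a b) (St a b')"
  and od_r_diff_mon: "od_r (diff_mon a a') b = diff_mon (Od a b) (Od a' b)"
  and od_l_diff_mon: "od_l a (diff_mon b b') = diff_mon (Od a b) (Od a b')"
  by (auto simp: diff_mon_def mon_def st_r_def st_l_def od_r_def od_l_def fun_eq_iff
           split: bterm.splits)

lemma St_cong_left: "bicom_eqv K a a' \<Longrightarrow> bicom_eqv K (St a b) (St a' b)"
  and St_cong_right: "bicom_eqv K b b' \<Longrightarrow> bicom_eqv K (St a b) (St a b')"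
  and Od_cong_left: "bicom_eqv K a a' \<Longrightarrow> bicom_eqv K (Od a b) (Od a' b)"
  and Od_cong_right: "bicom_eqv K b b' \<Longrightarrow> bicom_eqv K (Od a b) (Od a b')"
  unfolding bicom_eqv_def
  by (metis bicom_ideal.str st_r_diff_mon, metis bicom_ideal.stl st_l_diff_mon,
      metis bicom_ideal.odr od_r_diff_mon, metis bicom_ideal.odl od_l_diff_mon)

lemma St_left_commute: "bicom_eqv K (St a (St b c)) (St b (St a c))"
proof -
  have "bicom_eqv K (St a (St b c)) (St (St b c) a)" by (rule St_commute)
  also have "bicom_eqv K \<dots> (St b (St c a))" by (rule St_assoc)
  also have "bicom_eqv K \<dots> (St b (St a c))" by (rule St_cong_right[OF St_commute])
  finally show ?thesis .
qed

lemma Od_St_left: "bicom_eqv K (Od (St x a) b) (St x (Od a b))"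
proof -
  have "bicom_eqv K (Od (St x a) b) (Od b (St x a))" by (rule Od_commute)
  also have "bicom_eqv K \<dots> (Od b (St a x))" by (rule Od_cong_right[OF St_commute])
  also have "bicom_eqv K \<dots> (St (Od b a) x)" by (rule bicom_eqv_sym[OF St_Od_assoc])
  also have "bicom_eqv K \<dots> (St x (Od b a))" by (rule St_commute)
  also have "bicom_eqv K \<dots> (St x (Od a b))" by (rule St_cong_right[OF Od_commute])
  finally show ?thesis .
qed

lemma Od_St_right: "bicom_eqv K (Od a (St x b)) (St x (Od a b))"
proof -
  have "bicom_eqv K (Od a (St x b)) (Od (St x b) a)" by (rule Od_commute)
  also have "bicom_eqv K \<dots> (St x (Od b a))" by (rule Od_St_left)
  also have "bicom_eqv K \<dots> (St x (Od a b))" by (rule St_cong_right[OF Od_commute])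
  finally show ?thesis .
qed

lemma St_Od_rotate: "bicom_eqv K (St (Od y z) a) (St y (Od a z))"
proof -
  have "bicom_eqv K (St (Od y z) a) (St (Od z y) a)" by (rule St_cong_left[OF Od_commute])
  also have "bicom_eqv K \<dots> (Od z (St y a))" by (rule St_Od_assoc)
  also have "bicom_eqv K \<dots> (Od (St y a) z)" by (rule Od_commute)
  also have "bicom_eqv K \<dots> (St y (Od a z))" by (rule Od_St_left)
  finally show ?thesis .
qed

lemma St_Od_exchange: "bicom_eqv K (St a (Od b z)) (St b (Od a z))"
proof -
  have "bicom_eqv K (St a (Od b z)) (St (Od z b) a)"
    by (rule bicom_eqv_trans[OF St_commute St_cong_left[OF Od_commute]])
  also have "bicom_eqv K \<dots> (Od z (St b a))" by (rule St_Od_assoc)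
  also have "bicom_eqv K \<dots> (Od z (St a b))" by (rule Od_cong_right[OF St_commute])
  also have "bicom_eqv K \<dots> (St (Od z a) b)" by (rule bicom_eqv_sym[OF St_Od_assoc])
  also have "bicom_eqv K \<dots> (St b (Od a z))"
    by (rule bicom_eqv_trans[OF St_cong_left[OF Od_commute] St_commute])
  finally show ?thesis .
qed

section \<open>Reduction to normal words\<close>

lemma od_word_Cons: "ys \<noteq> [] \<Longrightarrow> od_word (y # ys) = Od (V y) (od_word ys)"
  by (cases ys) auto

lemma Od_od_word: "ys \<noteq> [] \<Longrightarrow> ys' \<noteq> [] \<Longrightarrow>
   bicom_eqv K (Od (od_word ys) (od_word ys')) (od_word (ys @ ys'))"
proof (induction ys rule: od_word.induct)
  case (2 y)
  then show ?case by (simp add: od_word_Cons bicom_eqv_refl)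
next
  case (3 y v vs)
  have "bicom_eqv K (Od (od_word (y # v # vs)) (od_word ys'))
          (Od (V y) (Od (od_word (v # vs)) (od_word ys')))"
    by (simp add: Od_assoc)
  also have "bicom_eqv K \<dots> (Od (V y) (od_word ((v # vs) @ ys')))"
    using 3 by (intro Od_cong_right) simp
  finally show ?case by simp
qed simp

lemma Od_nf_word: "ys \<noteq> [] \<Longrightarrow> ys' \<noteq> [] \<Longrightarrow>
  bicom_eqv K (Od (nf_word xs ys) (nf_word xs' ys')) (nf_word (xs @ xs') (ys @ ys'))"
proof (induction xs)
  case Nil
  then show ?case
  proof (induction xs')
    case (Cons x xs')
    have "bicom_eqv K (Od (nf_word [] ys) (nf_word (x # xs') ys'))
            (St (V x) (Od (nf_word [] ys) (nf_word xs' ys')))"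
      by (simp add: Od_St_right)
    also have "bicom_eqv K \<dots> (St (V x) (nf_word xs' (ys @ ys')))"
      using Cons by (intro St_cong_right) simp
    finally show ?case by simp
  qed (simp add: Od_od_word)
next
  case (Cons x xs)
  have "bicom_eqv K (Od (nf_word (x # xs) ys) (nf_word xs' ys'))
          (St (V x) (Od (nf_word xs ys) (nf_word xs' ys')))"
    by (simp add: Od_St_left)
  also have "bicom_eqv K \<dots> (St (V x) (nf_word (xs @ xs') (ys @ ys')))"
    using Cons by (intro St_cong_right) simp
  finally show ?case by simp
qed

text \<open>In a \<open>*\<close>-product the first \<open>\<odot>\<close>-letter of the left factor joins the \<open>*\<close>-block.\<close>
lemma St_nf_word: "ys \<noteq> [] \<Longrightarrow> ys' \<noteq> [] \<Longrightarrow>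
  bicom_eqv K (St (nf_word xs ys) (nf_word xs' ys')) (nf_word (xs @ xs' @ [hd ys]) (ys' @ tl ys))"
proof (induction xs)
  case Nil
  then show ?case
  proof (induction xs')
    case Nil
    then obtain y zs where ys: "ys = y # zs" by (cases ys) auto
    show ?case
    proof (cases "zs = []")
      case False
      have "bicom_eqv K (St (Od (V y) (od_word zs)) (od_word ys'))
              (St (V y) (Od (od_word ys') (od_word zs)))"
        by (rule St_Od_rotate)
      also have "bicom_eqv K \<dots> (St (V y) (od_word (ys' @ zs)))"
        using Nil False by (intro St_cong_right Od_od_word)
      finally show ?thesis using ys False by (simp add: od_word_Cons)
    qed (simp add: ys bicom_eqv_refl)
  next
    case (Cons x xs')
    have "bicom_eqv K (St (nf_word [] ys) (nf_word (x # xs') ys'))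
            (St (V x) (St (nf_word [] ys) (nf_word xs' ys')))"
      by (simp add: St_left_commute)
    also have "bicom_eqv K \<dots> (St (V x) (nf_word (xs' @ [hd ys]) (ys' @ tl ys)))"
      using Cons by (intro St_cong_right) simp
    finally show ?case by simp
  qed
next
  case (Cons x xs)
  have "bicom_eqv K (St (nf_word (x # xs) ys) (nf_word xs' ys'))
          (St (V x) (St (nf_word xs ys) (nf_word xs' ys')))"
    by (simp add: St_assoc)
  also have "bicom_eqv K \<dots> (St (V x) (nf_word (xs @ xs' @ [hd ys]) (ys' @ tl ys)))"
    using Cons by (intro St_cong_right) simp
  finally show ?case by simp
qed

lemma nf_word_exists: "\<exists>xs ys. ys \<noteq> [] \<and> bicom_eqv K t (nf_word xs ys)"
proof (induction t)
  case (V x)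
  show ?case by (intro exI[of _ "[]"] exI[of _ "[x]"]) (simp add: bicom_eqv_refl)
next
  case (St a b)
  then obtain xs ys xs' ys' where
    "ys \<noteq> []" "bicom_eqv K a (nf_word xs ys)" "ys' \<noteq> []" "bicom_eqv K b (nf_word xs' ys')"
    by blast
  then have "bicom_eqv K (St a b) (nf_word (xs @ xs' @ [hd ys]) (ys' @ tl ys))"
    by (meson St_cong_left St_cong_right St_nf_word bicom_eqv_trans)
  then show ?case using \<open>ys' \<noteq> []\<close> by blast
next
  case (Od a b)
  then obtain xs ys xs' ys' where
    "ys \<noteq> []" "bicom_eqv K a (nf_word xs ys)" "ys' \<noteq> []" "bicom_eqv K b (nf_word xs' ys')"
    by blast
  then have "bicom_eqv K (Od a b) (nf_word (xs @ xs') (ys @ ys'))"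
    by (meson Od_cong_left Od_cong_right Od_nf_word bicom_eqv_trans)
  then show ?case using \<open>ys \<noteq> []\<close> by blast
qed

section \<open>Sorting the letters of a normal word\<close>

text \<open>The block boundary \<open>k\<close> stays fixed while the letters \<open>zs\<close> are permuted.\<close>
definition nf_split :: "'x list \<Rightarrow> nat \<Rightarrow> 'x bterm" where
  "nf_split zs k = nf_word (take k zs) (drop k zs)"

lemma nf_split_Cons_Suc: "nf_split (a # zs) (Suc k) = St (V a) (nf_split zs k)"
  and nf_split_0: "nf_split zs 0 = od_word zs"
  by (simp_all add: nf_split_def)

lemma nf_split_swap: "bicom_eqv K (nf_split (p @ a # b # q) k) (nf_split (p @ b # a # q) k)"
proof (induction p arbitrary: k)
  case Nil
  consider "k = 0" | "k = 1" | k' where "k = Suc (Suc k')"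
    by (metis One_nat_def not0_implies_Suc)
  then show ?case
  proof cases
    case 1
    have "bicom_eqv K (Od (V a) (Od (V b) z)) (Od (V b) (Od (V a) z))" for z
    proof -
      have "bicom_eqv K (Od (V a) (Od (V b) z)) (Od (Od (V b) (V a)) z)"
        by (rule bicom_eqv_sym[OF bicom_eqv_trans[OF Od_cong_left[OF Od_commute] Od_assoc]])
      then show ?thesis using Od_assoc bicom_eqv_trans by blast
    qed
    then show ?thesis using 1 by (cases q) (simp_all add: nf_split_0 Od_commute)
  next
    case 2
    then show ?thesis by (cases q) (simp_all add: nf_split_def St_commute St_Od_exchange)
  next
    case 3
    then show ?thesis by (simp add: nf_split_Cons_Suc St_left_commute)
  qed
next
  case (Cons c p)
  show ?case
  proof (cases k)
    case 0
    then show ?thesis using Cons.IH[of 0] by (simp add: nf_split_0 od_word_Cons Od_cong_right)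
  next
    case (Suc k')
    then show ?thesis using Cons.IH[of k'] by (simp add: nf_split_Cons_Suc St_cong_right)
  qed
qed

lemma nf_split_move_front: "bicom_eqv K (nf_split (u @ a # v) k) (nf_split (a # u @ v) k)"
proof (induction u arbitrary: v rule: rev_induct)
  case (snoc b u)
  have "bicom_eqv K (nf_split ((u @ [b]) @ a # v) k) (nf_split (u @ a # b # v) k)"
    using nf_split_swap[of K u b a v k] by simp
  also have "bicom_eqv K \<dots> (nf_split (a # u @ b # v) k)" by (rule snoc)
  finally show ?case by simp
qed (simp add: bicom_eqv_refl)

lemma nf_split_perm: "mset zs = mset zs' \<Longrightarrow> bicom_eqv K (nf_split zs k) (nf_split zs' k)"
proof (induction zs' arbitrary: zs k)
  case (Cons a zs')
  then obtain u v where zs: "zs = u @ a # v"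
    by (metis list.set_intros(1) set_mset_mset split_list)
  have perm: "mset (u @ v) = mset zs'" using Cons.prems zs by simp
  have "bicom_eqv K (nf_split zs k) (nf_split (a # u @ v) k)"
    unfolding zs by (rule nf_split_move_front)
  also have "bicom_eqv K \<dots> (nf_split (a # zs') k)"
  proof (cases k)
    case 0
    show ?thesis
    proof (cases "zs' = []")
      case False
      then have "u @ v \<noteq> []" using perm by auto
      then show ?thesis
        using 0 False Cons.IH[OF perm, of 0] by (simp add: nf_split_0 od_word_Cons Od_cong_right)
    qed (use 0 perm in \<open>simp add: bicom_eqv_refl\<close>)
  next
    case (Suc k')
    then show ?thesis using Cons.IH[OF perm, of k'] by (simp add: nf_split_Cons_Suc St_cong_right)
  qed
  finally show ?case .
qed (simp add: bicom_eqv_refl)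

lemma basis_word_exists: "\<exists>w \<in> basis_words. bicom_eqv K (t :: 'x::linorder bterm) w"
proof -
  obtain xs ys where ys: "ys \<noteq> []" and t: "bicom_eqv K t (nf_word xs ys)"
    using nf_word_exists by blast
  let ?zs = "sort (xs @ ys)" and ?k = "length xs"
  have "bicom_eqv K (nf_split (xs @ ys) ?k) (nf_split ?zs ?k)" by (rule nf_split_perm) simp
  then have "bicom_eqv K t (nf_split ?zs ?k)" using t by (simp add: nf_split_def bicom_eqv_trans)
  moreover have "nf_split ?zs ?k \<in> basis_words"
    using ys unfolding nf_split_def basis_words_def
    by (intro CollectI exI[of _ "take ?k ?zs"] exI[of _ "drop ?k ?zs"]) simp
  ultimately show ?thesis by blast
qed

lemma bicom_ideal_sum:
  fixes g :: "'a \<Rightarrow> ('x, 'k::field) vec"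
  assumes "finite A" "\<And>t. t \<in> A \<Longrightarrow> g t \<in> bicom_ideal"
  shows "(\<lambda>s. \<Sum>t\<in>A. a t * g t s) \<in> bicom_ideal"
  using assms
proof (induction A rule: finite_induct)
  case empty
  then show ?case by (simp add: bicom_ideal.zero)
next
  case (insert x F)
  have "(\<lambda>s. a x * g x s + (\<Sum>t\<in>F. a t * g t s)) \<in> bicom_ideal"
    using insert by (intro bicom_ideal.add bicom_ideal.smult) auto
  then show ?case using insert by simp
qed

lemma basis_words_span:
  fixes f :: "('x::linorder, 'k::field) vec"
  assumes "fin_supp f"
  shows "\<exists>S c. finite S \<and> S \<subseteq> basis_words \<and> (\<lambda>s. f s - lincomb c S s) \<in> bicom_ideal"
proof -
  define A where "A = {t. f t \<noteq> 0}"
  have fin: "finite A" using assms by (simp add: fin_supp_def A_def)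
  define nf where "nf t = (SOME w. w \<in> basis_words \<and> bicom_eqv TYPE('k) t w)" for t :: "'x bterm"
  have nf: "nf t \<in> basis_words \<and> bicom_eqv TYPE('k) t (nf t)" for t
    unfolding nf_def by (rule someI_ex) (use basis_word_exists in blast)
  define c where "c w = sum f {t \<in> A. nf t = w}" for w
  have f_eq: "f s = (\<Sum>t\<in>A. f t * mon t s)" for s
    using fin by (simp add: mon_def A_def if_distrib sum.delta cong: if_cong)
  have lincomb_eq: "lincomb c (nf ` A) s = (\<Sum>t\<in>A. f t * mon (nf t) s)" for s
  proof -
    have "(\<Sum>t\<in>A. f t * mon (nf t) s)
        = (\<Sum>w\<in>nf ` A. \<Sum>t\<in>{t \<in> A. nf t = w}. f t * mon (nf t) s)"
      using fin by (rule sum.image_gen)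
    also have "\<dots> = (\<Sum>w\<in>nf ` A. \<Sum>t\<in>{t \<in> A. nf t = w}. f t * mon w s)"
      by (intro sum.cong) auto
    finally show ?thesis by (simp add: lincomb_def c_def sum_distrib_right)
  qed
  have "(\<lambda>s. f s - lincomb c (nf ` A) s) = (\<lambda>s. \<Sum>t\<in>A. f t * (diff_mon t (nf t) :: ('x, 'k) vec) s)"
    by (subst f_eq, subst lincomb_eq)
       (simp add: diff_mon_def right_diff_distrib sum_subtractf)
  also have "\<dots> \<in> bicom_ideal"
    using fin nf by (intro bicom_ideal_sum) (auto simp: bicom_eqv_def)
  finally show ?thesis using fin nf by blast
qed

theorem mainTheorem3:
  fixes dummy :: "'x::linorder itself" and dummyk :: "'k::field itself"
  shows "(\<forall>f :: ('x, 'k) vec. fin_supp f \<longrightarrow>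
            (\<exists>S c. finite S \<and> S \<subseteq> basis_words \<and>
                   (\<lambda>s. f s - lincomb c S s) \<in> bicom_ideal))
       \<and> (\<forall>(S :: 'x bterm set) (c :: 'x bterm \<Rightarrow> 'k).
            finite S \<and> S \<subseteq> basis_words \<and> lincomb c S \<in> bicom_ideal
            \<longrightarrow> (\<forall>w\<in>S. c w = 0))"
  using basis_words_span basis_words_independent by blast

end
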